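(* Let $\theta=\mathbf{1}_n$. Let $d=\frac{c(n-N)^2-aN^2}{n(n-2N)}$ and $b=\frac{nc-(a+c)N}{n-2N}$. Under $H_0$ the upper-triangular entries of $A$ are i.i.d. $\mathrm{Bernoulli}(d)$. Under $H_1$, $X_1,\dots,X_n$ are i.i.d. $\mathrm{Bernoulli}(N/n)$ and, conditionally on them, the upper-triangular entries of $A$ are independent with $\mathbb{P}(A_{ij}=1)=a$ if $X_i=X_j=1$, $c$ if $X_i=X_j=0$, and $b$ otherwise. Suppose, as $n\to\infty$, $0<c<a$, $c<1-\delta$ for a constant $\delta>0$, $b\ge0$, $N<n/3$, $D=O(\log n)$, and $$\limsup_{n\to\infty}\Big\{\Big(\log_n\tfrac{N}{\sqrt n}+\log_n\tfrac{a-c}{\sqrt c}\Big)\vee\Big(\sqrt{D/2-1}\,\log_n\tfrac{a-c}{\sqrt c}\Big)\Big\}<0.$$ Then for any sequence of polynomials $\phi_n$ of degree at most $D$ in the entries $\{A_{ij}\}_{i<j}$ with $\mathbb{E}_{H_0}\phi_n(A)=0$ and $\mathrm{Var}_{H_0}(\phi_n(A))=1$, we have $\mathbb{E}_{H_1}\phi_n(A)=o(1)$; indeed the supremum of $\mathbb{E}_{H_1}\phi_n(A)$ over all such polynomials is $o(1)$.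
   Context: $A$ is symmetric with zero diagonal; $\log_n x=\log x/\log n$. *)

theory Defs
  imports Complex_Main "HOL-Library.Landau_Symbols" "HOL-Library.Liminf_Limsup" "HOL-Library.Extended_Real"
begin

(* Upper-triangular index pairs (i,j), i<j<n; a graph / symmetric zero-diagonal
   adjacency matrix is identified with the set G of pairs where A_ij = 1. *)
definition edges :: "nat \<Rightarrow> (nat \<times> nat) set" where
  "edges n = {(i,j). i < j \<and> j < n}"

definition d_par :: "nat \<Rightarrow> real \<Rightarrow> real \<Rightarrow> real \<Rightarrow> real" where
  "d_par n N a c = (c * (real n - N)^2 - a * N^2) / (real n * (real n - 2 * N))"

definition b_par :: "nat \<Rightarrow> real \<Rightarrow> real \<Rightarrow> real \<Rightarrow> real" where
  "b_par n N a c = (real n * c - (a + c) * N) / (real n - 2 * N)"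

definition null_prob :: "nat \<Rightarrow> real \<Rightarrow> (nat \<times> nat) set \<Rightarrow> real" where
  "null_prob n q G = (\<Prod>e\<in>edges n. if e \<in> G then q else 1 - q)"

(* edge probability given the labels X (X = set of i with X_i = 1) *)
definition edge_p :: "real \<Rightarrow> real \<Rightarrow> real \<Rightarrow> nat set \<Rightarrow> nat \<times> nat \<Rightarrow> real" where
  "edge_p a b c X e = (if fst e \<in> X \<and> snd e \<in> X then a
                       else if fst e \<notin> X \<and> snd e \<notin> X then c else b)"

definition alt_prob :: "nat \<Rightarrow> real \<Rightarrow> real \<Rightarrow> real \<Rightarrow> (nat \<times> nat) set \<Rightarrow> real" where
  "alt_prob n N a c G =
     (\<Sum>X\<in>Pow {..<n}.
        (\<Prod>i<n. if i \<in> X then N / real n else 1 - N / real n) *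
        (\<Prod>e\<in>edges n. if e \<in> G then edge_p a (b_par n N a c) c X e
                                 else 1 - edge_p a (b_par n N a c) c X e))"

definition E_null :: "nat \<Rightarrow> real \<Rightarrow> ((nat \<times> nat) set \<Rightarrow> real) \<Rightarrow> real" where
  "E_null n q f = (\<Sum>G\<in>Pow (edges n). null_prob n q G * f G)"

definition Var_null :: "nat \<Rightarrow> real \<Rightarrow> ((nat \<times> nat) set \<Rightarrow> real) \<Rightarrow> real" where
  "Var_null n q f = E_null n q (\<lambda>G. (f G - E_null n q f)^2)"

definition E_alt :: "nat \<Rightarrow> real \<Rightarrow> real \<Rightarrow> real \<Rightarrow> ((nat \<times> nat) set \<Rightarrow> real) \<Rightarrow> real" where
  "E_alt n N a c f = (\<Sum>G\<in>Pow (edges n). alt_prob n N a c G * f G)"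

(* phi is (the evaluation on adjacency matrices of) a real polynomial of degree
   at most D in the variables A_e, e \<in> edges n: a finite linear combination of
   monomials prod_e A_e^(alpha e) with total degree sum_e alpha e \<le> D. *)
definition lowdeg_poly :: "nat \<Rightarrow> nat \<Rightarrow> ((nat \<times> nat) set \<Rightarrow> real) \<Rightarrow> bool" where
  "lowdeg_poly n D phi \<longleftrightarrow>
     (\<exists>F coef. finite F \<and>
        (\<forall>\<alpha>\<in>F. (\<forall>e. e \<notin> edges n \<longrightarrow> \<alpha> e = 0) \<and> (\<Sum>e\<in>edges n. \<alpha> e) \<le> D) \<and>
        (\<forall>G. G \<subseteq> edges n \<longrightarrow>
           phi G = (\<Sum>\<alpha>\<in>F. coef \<alpha> * (\<Prod>e\<in>edges n. (of_bool (e \<in> G) :: real) ^ \<alpha> e))))"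

end

theory Submission
  imports Defs "HOL-Analysis.Analysis" "HOL-Real_Asymp.Real_Asymp"
begin

text \<open>
  A polynomial of degree at most D is a combination of the q-biased characters
  \<chi>_S(A) = \<Prod>_{e\<in>S} (A_e - q), q = d, |S| \<le> D, which are orthogonal under H0 with
  \<parallel>\<chi>_S\<parallel>^2 = (q(1-q))^|S|. By Cauchy-Schwarz, E_{H1} \<phi> is at most the square root of
  \<Sum>_{0<|S|\<le>D} (E_{H1} \<chi>_S)^2 / (q(1-q))^|S|.

  Under H1 the centred edge probability is \<kappa>(X_i - p)(X_j - p) with p = N/n, so
  E_{H1} \<chi>_S = \<kappa>^|S| \<Prod>_{v\<in>V(S)} E (X - p)^{deg v}; this vanishes if S has a leaf and
  is otherwise at most \<kappa>^|S| p^|V(S)|, where |V(S)| \<le> |S|. At most n^k k^{2e} edge sets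
  have |S| = e and |V(S)| = k, so the sum is bounded by \<Sum>_{2\<le>k\<le>e\<le>D} (O(D^2) r^2)^e s^{2k}
  with s = N/\<surd>n and r = (a-c)/\<surd>c. The limsup hypothesis gives s^{2k} r^{2e} \<le> n^{-2\<mu>e}
  for \<mu> of order \<eta>/\<surd>D, and as D = O(log n) the factor n^{-2\<mu>} decays faster than any
  power of log n.
\<close>

definition bernoulli_prod :: "'a set \<Rightarrow> ('a \<Rightarrow> real) \<Rightarrow> 'a set \<Rightarrow> real" where
  "bernoulli_prod E r G = (\<Prod>e\<in>E. if e \<in> G then r e else 1 - r e)"

definition expect_on :: "'a set \<Rightarrow> ('a set \<Rightarrow> real) \<Rightarrow> ('a set \<Rightarrow> real) \<Rightarrow> real" where
  "expect_on E P f = (\<Sum>G\<in>Pow E. P G * f G)"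

definition biased_char :: "real \<Rightarrow> 'a set \<Rightarrow> 'a set \<Rightarrow> real" where
  "biased_char q S G = (\<Prod>e\<in>S. of_bool (e \<in> G) - q)"

lemma expect_on_cong:
  "(\<And>G. G \<subseteq> E \<Longrightarrow> f G = g G) \<Longrightarrow> expect_on E P f = expect_on E P g"
  unfolding expect_on_def by (intro sum.cong) auto

lemma expect_on_sum:
  "expect_on E P (\<lambda>G. \<Sum>i\<in>I. c i * f i G) = (\<Sum>i\<in>I. c i * expect_on E P (f i))"
  unfolding expect_on_def
  by (simp add: sum_distrib_left sum_distrib_right mult_ac sum.swap[of _ I])

lemma sum_Pow_prod_if:
  fixes f g :: "'a \<Rightarrow> real"
  assumes "finite E"
  shows "(\<Sum>G\<in>Pow E. \<Prod>e\<in>E. if e \<in> G then f e else g e) = (\<Prod>e\<in>E. f e + g e)"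
proof -
  have "(\<Prod>e\<in>E. f e + g e) = (\<Sum>G\<in>Pow E. (\<Prod>e\<in>G. f e) * (\<Prod>e\<in>E - G. g e))"
    by (rule prod_add[OF assms])
  also have "\<dots> = (\<Sum>G\<in>Pow E. \<Prod>e\<in>E. if e \<in> G then f e else g e)"
  proof (rule sum.cong)
    fix G assume "G \<in> Pow E"
    hence "E \<inter> {e. e \<in> G} = G" "E \<inter> - {e. e \<in> G} = E - G" by auto
    thus "(\<Prod>e\<in>G. f e) * (\<Prod>e\<in>E - G. g e) = (\<Prod>e\<in>E. if e \<in> G then f e else g e)"
      using prod.If_cases[OF assms, of "\<lambda>e. e \<in> G" f g] by simp
  qed simp
  finally show ?thesis by simp
qed

lemma expect_on_bernoulli_prod_prod:
  assumes "finite E"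
  shows "expect_on E (bernoulli_prod E r) (\<lambda>G. \<Prod>e\<in>E. h e (e \<in> G))
       = (\<Prod>e\<in>E. r e * h e True + (1 - r e) * h e False)"
proof -
  have "expect_on E (bernoulli_prod E r) (\<lambda>G. \<Prod>e\<in>E. h e (e \<in> G))
      = (\<Sum>G\<in>Pow E. \<Prod>e\<in>E. if e \<in> G then r e * h e True else (1 - r e) * h e False)"
    unfolding expect_on_def bernoulli_prod_def
    by (intro sum.cong refl) (auto simp: prod.distrib[symmetric] intro!: prod.cong)
  also have "\<dots> = (\<Prod>e\<in>E. r e * h e True + (1 - r e) * h e False)"
    by (rule sum_Pow_prod_if[OF assms])
  finally show ?thesis .
qed

lemma prod_subset_if:
  assumes "finite E" "S \<subseteq> E"
  shows "(\<Prod>e\<in>E. if e \<in> S then f e else 1) = prod f S"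
  using prod.inter_restrict[OF assms(1), of f S] assms(2) by (simp add: Int_absorb1)

lemma biased_char_eq_prod_if:
  assumes "finite E" "S \<subseteq> E"
  shows "biased_char q S G = (\<Prod>e\<in>E. if e \<in> S then of_bool (e \<in> G) - q else 1)"
  unfolding biased_char_def by (rule prod_subset_if[OF assms, symmetric])

lemma expect_on_biased_char:
  assumes "finite E" "S \<subseteq> E"
  shows "expect_on E (bernoulli_prod E r) (biased_char q S) = (\<Prod>e\<in>S. r e - q)"
proof -
  have "expect_on E (bernoulli_prod E r) (biased_char q S)
      = expect_on E (bernoulli_prod E r)
          (\<lambda>G. \<Prod>e\<in>E. (\<lambda>e b. if e \<in> S then of_bool b - q else 1) e (e \<in> G))"
    by (intro expect_on_cong) (simp add: biased_char_eq_prod_if[OF assms])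
  also have "\<dots> = (\<Prod>e\<in>E. if e \<in> S then r e - q else 1)"
    by (subst expect_on_bernoulli_prod_prod[OF assms(1)]) (auto simp: algebra_simps intro!: prod.cong)
  also have "\<dots> = (\<Prod>e\<in>S. r e - q)"
    by (rule prod_subset_if[OF assms])
  finally show ?thesis .
qed

lemma expect_on_mixture_biased_char:
  assumes "finite E" "S \<subseteq> E"
  shows "expect_on E (\<lambda>G. \<Sum>x\<in>I. w x * bernoulli_prod E (r x) G) (biased_char q S)
       = (\<Sum>x\<in>I. w x * (\<Prod>e\<in>S. r x e - q))"
  unfolding expect_on_biased_char[OF assms, symmetric]
  by (simp add: expect_on_def sum_distrib_left sum_distrib_right mult_ac sum.swap[of _ I])

lemma expect_on_biased_char_mult:
  assumes "finite E" "S \<subseteq> E" "T \<subseteq> E"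
  shows "expect_on E (bernoulli_prod E (\<lambda>_. q)) (\<lambda>G. biased_char q S G * biased_char q T G)
       = (if S = T then (q * (1 - q)) ^ card S else 0)"
proof -
  define h where "h e b = (if e \<in> S then of_bool b - q else 1) * (if e \<in> T then of_bool b - q else 1)"
    for e b
  have "expect_on E (bernoulli_prod E (\<lambda>_. q)) (\<lambda>G. biased_char q S G * biased_char q T G)
      = expect_on E (bernoulli_prod E (\<lambda>_. q)) (\<lambda>G. \<Prod>e\<in>E. h e (e \<in> G))"
    by (intro expect_on_cong)
      (simp add: biased_char_eq_prod_if[OF assms(1,2)] biased_char_eq_prod_if[OF assms(1,3)]
        prod.distrib h_def)
  also have "\<dots> = (\<Prod>e\<in>E. q * h e True + (1 - q) * h e False)"
    by (rule expect_on_bernoulli_prod_prod[OF assms(1)])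
  also have "\<dots> = (if S = T then (q * (1 - q)) ^ card S else 0)"
  proof (cases "S = T")
    case True
    have "q * ((1 - q) * (1 - q)) + (1 - q) * ((0 - q) * (0 - q)) = q * (1 - q)" by algebra
    hence "(\<Prod>e\<in>E. q * h e True + (1 - q) * h e False) = (\<Prod>e\<in>E. if e \<in> S then q * (1 - q) else 1)"
      using True by (intro prod.cong) (auto simp: h_def)
    thus ?thesis using True prod_subset_if[OF assms(1,2), of "\<lambda>_. q * (1 - q)"] by simp
  next
    case False
    then obtain e where "e \<in> E" "(e \<in> S) \<noteq> (e \<in> T)" using assms by blast
    moreover from this(2) have "q * h e True + (1 - q) * h e False = 0"
      by (cases "e \<in> S") (simp_all add: h_def)
    ultimately show ?thesis using False assms(1) by (auto intro: prod_zero)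
  qed
  finally show ?thesis .
qed

lemma expect_on_biased_char_null:
  assumes "finite E" "S \<subseteq> E"
  shows "expect_on E (bernoulli_prod E (\<lambda>_. q)) (biased_char q S) = of_bool (S = {})"
  using expect_on_biased_char[OF assms, of "\<lambda>_. q" q] finite_subset[OF assms(2,1)]
  by (simp add: card_gt_0_iff)

lemma prod_of_bool_eq_sum_biased_char:
  assumes "finite T"
  shows "(\<Prod>e\<in>T. of_bool (e \<in> G)) = (\<Sum>X\<in>Pow T. q ^ card (T - X) * biased_char q X G)"
proof -
  have "(\<Prod>e\<in>T. of_bool (e \<in> G)) = (\<Prod>e\<in>T. (of_bool (e \<in> G) - q) + q)" by simp
  also have "\<dots> = (\<Sum>X\<in>Pow T. (\<Prod>e\<in>X. of_bool (e \<in> G) - q) * (\<Prod>e\<in>T - X. q))"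
    by (rule prod_add[OF assms])
  finally show ?thesis by (simp add: biased_char_def mult.commute)
qed

lemma finite_edges [simp]: "finite (edges n)"
  by (rule finite_subset[of _ "{..<n} \<times> {..<n}"]) (auto simp: edges_def)

lemma of_bool_power: "(of_bool b :: real) ^ k = (if k = 0 then 1 else of_bool b)"
  by (cases b) simp_all

lemma lowdeg_poly_biased_char_expansion:
  assumes "lowdeg_poly n D \<phi>"
  obtains ch where "\<And>G. G \<subseteq> edges n \<Longrightarrow>
    \<phi> G = (\<Sum>S | S \<subseteq> edges n \<and> card S \<le> D. ch S * biased_char q S G)"
proof -
  obtain F coef where F: "finite F"
    "\<forall>\<alpha>\<in>F. (\<forall>e. e \<notin> edges n \<longrightarrow> \<alpha> e = 0) \<and> (\<Sum>e\<in>edges n. \<alpha> e) \<le> D"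
    "\<forall>G. G \<subseteq> edges n \<longrightarrow>
       \<phi> G = (\<Sum>\<alpha>\<in>F. coef \<alpha> * (\<Prod>e\<in>edges n. of_bool (e \<in> G) ^ \<alpha> e))"
    using assms unfolding lowdeg_poly_def by blast
  define SS where "SS = {S. S \<subseteq> edges n \<and> card S \<le> D}"
  have "finite SS" unfolding SS_def by (rule finite_subset[of _ "Pow (edges n)"]) auto
  define T where "T \<alpha> = {e \<in> edges n. \<alpha> e > 0}" for \<alpha> :: "nat \<times> nat \<Rightarrow> nat"
  define k where "k \<alpha> S = (if S \<subseteq> T \<alpha> then q ^ card (T \<alpha> - S) else 0)" for \<alpha> S
  have finite_T: "finite (T \<alpha>)" for \<alpha> by (simp add: T_def)
  have Pow_T: "Pow (T \<alpha>) \<subseteq> SS" if "\<alpha> \<in> F" for \<alpha>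
  proof
    fix X assume "X \<in> Pow (T \<alpha>)"
    hence X: "X \<subseteq> T \<alpha>" by simp
    have "card X \<le> card (T \<alpha>)" by (rule card_mono[OF finite_T X])
    also have "\<dots> \<le> (\<Sum>e\<in>T \<alpha>. \<alpha> e)"
      using sum_mono[of "T \<alpha>" "\<lambda>_. 1" \<alpha>] by (simp add: T_def Suc_le_eq)
    also have "\<dots> \<le> (\<Sum>e\<in>edges n. \<alpha> e)" by (intro sum_mono2) (auto simp: T_def)
    also have "\<dots> \<le> D" using F(2) that by blast
    finally show "X \<in> SS" using X by (auto simp: SS_def T_def)
  qed
  have monomial: "(\<Prod>e\<in>edges n. of_bool (e \<in> G) ^ \<alpha> e) = (\<Sum>S\<in>SS. k \<alpha> S * biased_char q S G)"
    if "\<alpha> \<in> F" for \<alpha> G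
  proof -
    have "(\<Prod>e\<in>edges n. of_bool (e \<in> G) ^ \<alpha> e)
        = (\<Prod>e\<in>edges n. if e \<in> T \<alpha> then of_bool (e \<in> G) else (1::real))"
      by (intro prod.cong refl) (simp add: T_def of_bool_power)
    also have "\<dots> = (\<Prod>e\<in>T \<alpha>. of_bool (e \<in> G))"
      by (rule prod_subset_if) (auto simp: T_def)
    also have "\<dots> = (\<Sum>S\<in>Pow (T \<alpha>). k \<alpha> S * biased_char q S G)"
      unfolding prod_of_bool_eq_sum_biased_char[OF finite_T, where q=q] by (intro sum.cong refl) (simp add: k_def)
    also have "\<dots> = (\<Sum>S\<in>SS. k \<alpha> S * biased_char q S G)"
      using Pow_T[OF that] by (intro sum.mono_neutral_left \<open>finite SS\<close>) (auto simp: k_def)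
    finally show ?thesis .
  qed
  show ?thesis
  proof
    fix G assume "G \<subseteq> edges n"
    hence "\<phi> G = (\<Sum>\<alpha>\<in>F. coef \<alpha> * (\<Sum>S\<in>SS. k \<alpha> S * biased_char q S G))"
      using F(3) monomial by simp
    also have "\<dots> = (\<Sum>S\<in>SS. (\<Sum>\<alpha>\<in>F. coef \<alpha> * k \<alpha> S) * biased_char q S G)"
      by (simp add: sum_distrib_left sum_distrib_right sum.swap[of _ F] mult_ac)
    finally show "\<phi> G = (\<Sum>S | S \<subseteq> edges n \<and> card S \<le> D.
        (\<Sum>\<alpha>\<in>F. coef \<alpha> * k \<alpha> S) * biased_char q S G)"
      by (simp add: SS_def)
  qed
qed

text \<open>In the paper's notation this is \<parallel>L^{\<le>D}\<parallel>^2 - 1, the squared norm of the non-constant part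
  of the low-degree likelihood ratio.\<close>

definition low_degree_chi2 :: "'a set \<Rightarrow> nat \<Rightarrow> real \<Rightarrow> ('a set \<Rightarrow> real) \<Rightarrow> real" where
  "low_degree_chi2 E D q P =
     (\<Sum>S | S \<subseteq> E \<and> S \<noteq> {} \<and> card S \<le> D. (expect_on E P (biased_char q S))\<^sup>2 / (q * (1 - q)) ^ card S)"

lemma abs_expect_on_le_sqrt_low_degree_chi2:
  assumes E: "finite E" and q: "0 < q" "q < 1"
    and expansion: "\<And>G. G \<subseteq> E \<Longrightarrow> \<phi> G = (\<Sum>S | S \<subseteq> E \<and> card S \<le> D. ch S * biased_char q S G)"
    and mean: "expect_on E (bernoulli_prod E (\<lambda>_. q)) \<phi> = 0"
    and second_moment: "expect_on E (bernoulli_prod E (\<lambda>_. q)) (\<lambda>G. (\<phi> G)\<^sup>2) = 1"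
  shows "\<bar>expect_on E P \<phi>\<bar> \<le> sqrt (low_degree_chi2 E D q P)"
proof -
  define SS where "SS = {S. S \<subseteq> E \<and> card S \<le> D}"
  define w where "w S = (q * (1 - q)) ^ card S" for S :: "'a set"
  let ?P0 = "bernoulli_prod E (\<lambda>_. q)"
  have finSS: "finite SS" unfolding SS_def by (rule finite_subset[of _ "Pow E"]) (use E in auto)
  have empty: "{} \<in> SS" by (simp add: SS_def)
  have sub: "S \<subseteq> E" if "S \<in> SS" for S using that by (simp add: SS_def)
  have w_pos: "w S > 0" for S using q by (simp add: w_def)
  have linear: "expect_on E P' \<phi> = (\<Sum>S\<in>SS. ch S * expect_on E P' (biased_char q S))" for P'
    by (subst expect_on_cong[OF expansion]) (simp_all add: SS_def expect_on_sum)
  have "expect_on E ?P0 \<phi> = (\<Sum>S\<in>SS. ch S * of_bool (S = {}))"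
    unfolding linear by (intro sum.cong refl) (simp add: expect_on_biased_char_null[OF E sub])
  also have "\<dots> = ch {}"
    using empty finSS by (simp add: sum.delta)
  finally have ch_empty: "ch {} = 0" using mean by simp
  have "expect_on E ?P0 (\<lambda>G. (\<phi> G)\<^sup>2)
      = expect_on E ?P0 (\<lambda>G. \<Sum>S\<in>SS. ch S * (\<Sum>T\<in>SS. ch T * (biased_char q S G * biased_char q T G)))"
    by (intro expect_on_cong)
      (simp add: expansion SS_def power2_eq_square sum_distrib_left sum_distrib_right mult_ac)
  also have "\<dots> = (\<Sum>S\<in>SS. ch S * (\<Sum>T\<in>SS. ch T *
                     expect_on E ?P0 (\<lambda>G. biased_char q S G * biased_char q T G)))"
    by (simp add: expect_on_sum)
  also have "\<dots> = (\<Sum>S\<in>SS. (ch S)\<^sup>2 * w S)"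
    using finSS
    by (intro sum.cong refl) (simp add: expect_on_biased_char_mult[OF E sub sub] w_def
        if_distrib[of "\<lambda>x. _ * x"] sum.delta power2_eq_square cong: if_cong)
  finally have unit: "(\<Sum>S\<in>SS - {{}}. (ch S * sqrt (w S))\<^sup>2) = 1"
    using second_moment empty finSS ch_empty w_pos
    by (simp add: sum_diff1 power_mult_distrib less_imp_le)
  have "expect_on E P \<phi> = (\<Sum>S\<in>SS - {{}}. ch S * expect_on E P (biased_char q S))"
    using linear[of P] empty finSS ch_empty by (simp add: sum_diff1)
  also have "\<dots> = (\<Sum>S\<in>SS - {{}}. (ch S * sqrt (w S)) * (expect_on E P (biased_char q S) / sqrt (w S)))"
    using w_pos by (intro sum.cong refl) (simp add: field_simps less_imp_neq[symmetric])
  finally have "(expect_on E P \<phi>)\<^sup>2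
      \<le> (\<Sum>S\<in>SS - {{}}. (ch S * sqrt (w S))\<^sup>2) * (\<Sum>S\<in>SS - {{}}. (expect_on E P (biased_char q S) / sqrt (w S))\<^sup>2)"
    by (simp only: Cauchy_Schwarz_ineq_sum)
  also have "\<dots> = low_degree_chi2 E D q P"
    unfolding unit low_degree_chi2_def mult_1 using w_pos
    by (intro sum.cong) (auto simp: SS_def w_def power_divide less_imp_le)
  finally have "(expect_on E P \<phi>)\<^sup>2 \<le> low_degree_chi2 E D q P" .
  from real_sqrt_le_mono[OF this] show ?thesis by simp
qed

definition deg :: "('v \<times> 'v) set \<Rightarrow> 'v \<Rightarrow> nat" where
  "deg S i = card {e \<in> S. fst e = i} + card {e \<in> S. snd e = i}"

definition verts :: "('v \<times> 'v) set \<Rightarrow> 'v set" where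
  "verts S = fst ` S \<union> snd ` S"

lemma finite_verts [simp]: "finite S \<Longrightarrow> finite (verts S)"
  by (simp add: verts_def)

lemma subset_verts_Times: "S \<subseteq> verts S \<times> verts S"
  by (force simp: verts_def)

lemma verts_subset_lessThan: "S \<subseteq> edges n \<Longrightarrow> verts S \<subseteq> {..<n}"
  by (auto simp: verts_def edges_def)

lemma deg_pos_iff:
  assumes "finite S"
  shows "0 < deg S i \<longleftrightarrow> i \<in> verts S"
proof -
  have "0 < deg S i \<longleftrightarrow> {e \<in> S. fst e = i} \<noteq> {} \<or> {e \<in> S. snd e = i} \<noteq> {}"
    using assms by (simp add: deg_def card_gt_0_iff)
  also have "\<dots> \<longleftrightarrow> i \<in> verts S" unfolding verts_def image_iff by blast
  finally show ?thesis .
qed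

lemma prod_comp_eq_prod_power_card:
  fixes u :: "'b \<Rightarrow> 'c :: comm_monoid_mult"
  assumes "finite S" "finite V" "g ` S \<subseteq> V"
  shows "(\<Prod>e\<in>S. u (g e)) = (\<Prod>i\<in>V. u i ^ card {e \<in> S. g e = i})"
proof -
  have "(\<Prod>e\<in>S. u (g e)) = (\<Prod>i\<in>V. \<Prod>e\<in>{e \<in> S. g e = i}. u (g e))"
    by (rule prod.group[symmetric, OF assms])
  also have "\<dots> = (\<Prod>i\<in>V. \<Prod>e\<in>{e \<in> S. g e = i}. u i)"
    by (intro prod.cong refl) simp
  also have "\<dots> = (\<Prod>i\<in>V. u i ^ card {e \<in> S. g e = i})"
    by simp
  finally show ?thesis .
qed

lemma prod_pairs_eq_prod_deg:
  fixes u :: "'v \<Rightarrow> 'c :: comm_monoid_mult"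
  assumes S: "finite S" and V: "finite V" "verts S \<subseteq> V"
  shows "(\<Prod>e\<in>S. u (fst e) * u (snd e)) = (\<Prod>i\<in>V. u i ^ deg S i)"
proof -
  have fst: "(\<Prod>e\<in>S. u (fst e)) = (\<Prod>i\<in>V. u i ^ card {e \<in> S. fst e = i})"
    by (rule prod_comp_eq_prod_power_card[OF S V(1)]) (use V(2) in \<open>auto simp: verts_def\<close>)
  have snd: "(\<Prod>e\<in>S. u (snd e)) = (\<Prod>i\<in>V. u i ^ card {e \<in> S. snd e = i})"
    by (rule prod_comp_eq_prod_power_card[OF S V(1)]) (use V(2) in \<open>auto simp: verts_def\<close>)
  have "(\<Prod>e\<in>S. u (fst e) * u (snd e)) = (\<Prod>e\<in>S. u (fst e)) * (\<Prod>e\<in>S. u (snd e))"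
    by (rule prod.distrib)
  also have "\<dots> = (\<Prod>i\<in>V. u i ^ deg S i)"
    unfolding fst snd deg_def power_add by (rule prod.distrib[symmetric])
  finally show ?thesis .
qed

lemma sum_card_fibres:
  assumes "finite S" "finite V" "g ` S \<subseteq> V"
  shows "(\<Sum>i\<in>V. card {e \<in> S. g e = i}) = card S"
  using sum.group[OF assms, of "\<lambda>_. 1::nat"] by simp

lemma sum_deg_verts: "finite S \<Longrightarrow> (\<Sum>i\<in>verts S. deg S i) = 2 * card S"
  by (simp add: deg_def sum.distrib sum_card_fibres verts_def)

lemma two_le_card_verts:
  assumes "S \<subseteq> edges n" "S \<noteq> {}"
  shows "2 \<le> card (verts S)"
proof -
  obtain e where e: "e \<in> S" using assms(2) by blast
  have "fst e < snd e" using assms(1) e by (cases e) (auto simp: edges_def)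
  moreover have "finite (verts S)" using assms(1) finite_subset by (metis finite_edges finite_verts)
  moreover have "{fst e, snd e} \<subseteq> verts S" using e by (auto simp: verts_def)
  ultimately show ?thesis using card_mono[of "verts S" "{fst e, snd e}"] by simp
qed

lemma card_verts_le_card:
  assumes "finite S" "\<forall>i\<in>verts S. deg S i \<noteq> 1"
  shows "card (verts S) \<le> card S"
proof -
  have "2 * card (verts S) = (\<Sum>i\<in>verts S. 2)" by simp
  also have "\<dots> \<le> (\<Sum>i\<in>verts S. deg S i)"
  proof (rule sum_mono)
    fix i assume "i \<in> verts S"
    thus "2 \<le> deg S i" using assms deg_pos_iff[OF assms(1), of i] by fastforce
  qed
  also have "\<dots> = 2 * card S" by (rule sum_deg_verts[OF assms(1)])
  finally show ?thesis by simp
qed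

lemma binomial_le_power: "n choose r \<le> n ^ r"
  by (cases "r \<le> n") (auto simp: binomial_le_pow binomial_eq_0)

lemma card_edge_sets_le:
  "card {S. S \<subseteq> edges n \<and> card S = e \<and> card (verts S) = k} \<le> n ^ k * (k * k) ^ e"
proof -
  define I where "I = {V. V \<subseteq> {..<n} \<and> card V = k}"
  have finite_I: "finite I" unfolding I_def by (rule finite_subset[of _ "Pow {..<n}"]) auto
  have finite_V: "finite V" if "V \<in> I" for V using that finite_subset by (auto simp: I_def)
  have "{S. S \<subseteq> edges n \<and> card S = e \<and> card (verts S) = k} \<subseteq> (\<Union>V\<in>I. {S. S \<subseteq> V \<times> V \<and> card S = e})"
  proof
    fix S assume "S \<in> {S. S \<subseteq> edges n \<and> card S = e \<and> card (verts S) = k}"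
    hence "verts S \<in> I" "S \<in> {S'. S' \<subseteq> verts S \<times> verts S \<and> card S' = e}"
      using verts_subset_lessThan subset_verts_Times[of S] by (auto simp: I_def)
    thus "S \<in> (\<Union>V\<in>I. {S. S \<subseteq> V \<times> V \<and> card S = e})" by blast
  qed
  moreover have "finite (\<Union>V\<in>I. {S. S \<subseteq> V \<times> V \<and> card S = e})"
  proof (intro finite_UN_I finite_I)
    fix V assume "V \<in> I"
    hence "finite (Pow (V \<times> V))" using finite_V by simp
    thus "finite {S. S \<subseteq> V \<times> V \<and> card S = e}" by (rule finite_subset[rotated]) auto
  qed
  ultimately have "card {S. S \<subseteq> edges n \<and> card S = e \<and> card (verts S) = k}
      \<le> card (\<Union>V\<in>I. {S. S \<subseteq> V \<times> V \<and> card S = e})"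
    by (rule card_mono[rotated])
  also have "\<dots> \<le> (\<Sum>V\<in>I. card {S. S \<subseteq> V \<times> V \<and> card S = e})"
    by (rule card_UN_le[OF finite_I])
  also have "\<dots> = (\<Sum>V\<in>I. (k * k) choose e)"
    using finite_V by (intro sum.cong refl) (simp add: n_subsets I_def card_cartesian_product)
  also have "\<dots> = (n choose k) * ((k * k) choose e)"
    using n_subsets[of "{..<n}" k] by (simp add: I_def)
  also have "\<dots> \<le> n ^ k * (k * k) ^ e"
    by (intro mult_mono binomial_le_power) auto
  finally show ?thesis .
qed

definition bernoulli_central_moment :: "real \<Rightarrow> nat \<Rightarrow> real" where
  "bernoulli_central_moment p k = p * (1 - p) ^ k + (1 - p) * (- p) ^ k"

lemma bernoulli_central_moment_0 [simp]: "bernoulli_central_moment p 0 = 1"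
  and bernoulli_central_moment_1 [simp]: "bernoulli_central_moment p 1 = 0"
  by (simp_all add: bernoulli_central_moment_def algebra_simps)

lemma abs_bernoulli_central_moment_le:
  assumes "0 \<le> p" "p \<le> 1" "2 \<le> k"
  shows "\<bar>bernoulli_central_moment p k\<bar> \<le> p"
proof -
  have "\<bar>bernoulli_central_moment p k\<bar> \<le> p * (1 - p) ^ k + (1 - p) * p ^ k"
    unfolding bernoulli_central_moment_def using assms
    by (auto simp: abs_mult power_abs intro!: order_trans[OF abs_triangle_ineq])
  also have "\<dots> \<le> p * (1 - p) ^ 2 + (1 - p) * p ^ 2"
    using assms by (intro add_mono mult_left_mono power_decreasing) auto
  also have "\<dots> = p * (1 - p)" by (simp add: power2_eq_square algebra_simps)
  also have "\<dots> \<le> p" using assms by (simp add: mult_left_le)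
  finally show ?thesis .
qed

lemma alt_prob_eq_mixture:
  "alt_prob n N a c = (\<lambda>G. \<Sum>X\<in>Pow {..<n}.
     bernoulli_prod {..<n} (\<lambda>_. N / real n) X * bernoulli_prod (edges n) (edge_p a (b_par n N a c) c X) G)"
  by (simp add: fun_eq_iff alt_prob_def bernoulli_prod_def)

lemma edge_p_minus_d_par:
  assumes "0 < n" "2 * N \<noteq> real n"
  shows "edge_p a (b_par n N a c) c X e - d_par n N a c =
         real n * (a - c) / (real n - 2 * N) *
           ((of_bool (fst e \<in> X) - N / real n) * (of_bool (snd e \<in> X) - N / real n))"
proof -
  have "real n \<noteq> 0" "real n - 2 * N \<noteq> 0" using assms by auto
  thus ?thesis
    by (cases "fst e \<in> X"; cases "snd e \<in> X";
        simp add: edge_p_def d_par_def b_par_def divide_simps; algebra)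
qed

lemma expect_on_planted_biased_char:
  assumes "0 < n" "2 * N \<noteq> real n" "S \<subseteq> edges n"
  shows "expect_on (edges n) (alt_prob n N a c) (biased_char (d_par n N a c) S) =
     (real n * (a - c) / (real n - 2 * N)) ^ card S *
     (\<Prod>i\<in>verts S. bernoulli_central_moment (N / real n) (deg S i))"
proof -
  define \<kappa> where "\<kappa> = real n * (a - c) / (real n - 2 * N)"
  define p where "p = N / real n"
  define u where "u X i = of_bool (i \<in> X) - p" for X :: "nat set" and i :: nat
  have S: "finite S" "verts S \<subseteq> {..<n}"
    using finite_subset[OF assms(3)] verts_subset_lessThan[OF assms(3)] by simp_all
  have "expect_on (edges n) (alt_prob n N a c) (biased_char (d_par n N a c) S)
      = (\<Sum>X\<in>Pow {..<n}. bernoulli_prod {..<n} (\<lambda>_. p) X * (\<Prod>e\<in>S. \<kappa> * (u X (fst e) * u X (snd e))))"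
    unfolding alt_prob_eq_mixture expect_on_mixture_biased_char[OF finite_edges assms(3)]
      edge_p_minus_d_par[OF assms(1,2)] \<kappa>_def p_def u_def ..
  also have "\<dots> = \<kappa> ^ card S * expect_on {..<n} (bernoulli_prod {..<n} (\<lambda>_. p))
                     (\<lambda>X. \<Prod>i<n. (\<lambda>i b. (of_bool b - p) ^ deg S i) i (i \<in> X))"
  proof -
    have "(\<Prod>e\<in>S. \<kappa> * (u X (fst e) * u X (snd e))) = \<kappa> ^ card S * (\<Prod>i<n. u X i ^ deg S i)" for X
      unfolding prod.distrib[of "\<lambda>_. \<kappa>"] prod_pairs_eq_prod_deg[OF S(1) finite_lessThan S(2)]
      by simp
    thus ?thesis by (simp add: expect_on_def sum_distrib_left u_def mult_ac)
  qed
  also have "\<dots> = \<kappa> ^ card S * (\<Prod>i<n. bernoulli_central_moment p (deg S i))"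
    using expect_on_bernoulli_prod_prod[OF finite_lessThan, where r="\<lambda>_. p" and h="\<lambda>i b. (of_bool b - p) ^ deg S i"]
    by (simp add: bernoulli_central_moment_def)
  also have "(\<Prod>i<n. bernoulli_central_moment p (deg S i)) = (\<Prod>i\<in>verts S. bernoulli_central_moment p (deg S i))"
    using S deg_pos_iff[OF S(1)] by (intro prod.mono_neutral_right) (auto, metis neq0_conv bernoulli_central_moment_0)
  finally show ?thesis by (simp add: \<kappa>_def p_def)
qed

lemma abs_prod_bernoulli_central_moment_le:
  assumes "0 \<le> p" "p \<le> 1" "\<And>i. i \<in> V \<Longrightarrow> 2 \<le> k i"
  shows "\<bar>\<Prod>i\<in>V. bernoulli_central_moment p (k i)\<bar> \<le> p ^ card V"
proof -
  have "\<bar>\<Prod>i\<in>V. bernoulli_central_moment p (k i)\<bar> = (\<Prod>i\<in>V. \<bar>bernoulli_central_moment p (k i)\<bar>)"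
    by (rule abs_prod)
  also have "\<dots> \<le> (\<Prod>i\<in>V. p)"
    using assms abs_bernoulli_central_moment_le by (intro prod_mono) auto
  finally show ?thesis by simp
qed

lemma planted_chi2_term_le:
  fixes n :: nat and N a c :: real
  defines "q \<equiv> d_par n N a c" and "p \<equiv> N / real n"
    and "t \<equiv> (real n * (a - c) / (real n - 2 * N))\<^sup>2 / (d_par n N a c * (1 - d_par n N a c))"
  assumes "0 < N" "3 * N < real n" "0 < q" "q < 1" "S \<subseteq> edges n"
  shows "(expect_on (edges n) (alt_prob n N a c) (biased_char q S))\<^sup>2 / (q * (1 - q)) ^ card S
      \<le> (if card (verts S) \<le> card S then t ^ card S * p ^ (2 * card (verts S)) else 0)"
proof -
  define M where "M = (\<Prod>i\<in>verts S. bernoulli_central_moment p (deg S i))"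
  have S: "finite S" using finite_subset[OF assms(8)] by simp
  have p: "0 \<le> p" "p \<le> 1" using assms(4,5) by (auto simp: p_def)
  have "(expect_on (edges n) (alt_prob n N a c) (biased_char q S))\<^sup>2 / (q * (1 - q)) ^ card S
      = t ^ card S * M\<^sup>2"
    using assms(4,5)
    by (simp add: q_def expect_on_planted_biased_char[OF _ _ assms(8)] t_def M_def p_def
        power_mult_distrib power_divide mult.commute[of 2] flip: power_mult)
  also have "\<dots> \<le> (if card (verts S) \<le> card S then t ^ card S * p ^ (2 * card (verts S)) else 0)"
  proof (cases "\<forall>i\<in>verts S. deg S i \<noteq> 1")
    case True
    have "2 \<le> deg S i" if "i \<in> verts S" for i
      using True deg_pos_iff[OF S, of i] that by fastforce
    hence "\<bar>M\<bar> \<le> p ^ card (verts S)"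
      unfolding M_def by (rule abs_prod_bernoulli_central_moment_le[OF p])
    hence "M\<^sup>2 \<le> p ^ (2 * card (verts S))"
      by (metis abs_ge_zero power2_abs power_mono power_mult mult.commute)
    moreover have "0 \<le> t" using assms(6,7) unfolding t_def q_def[symmetric] by simp
    ultimately show ?thesis using card_verts_le_card[OF S True] by (simp add: mult_left_mono)
  next
    case False
    then obtain i where "i \<in> verts S" "deg S i = 1" by blast
    hence "M = 0" unfolding M_def using S by (intro prod_zero) (auto simp: bernoulli_central_moment_def intro!: bexI[of _ i])
    thus ?thesis using p assms(6,7) unfolding t_def q_def[symmetric] by simp
  qed
  finally show ?thesis .
qed

lemma low_degree_chi2_planted_le_sum:
  fixes n D :: nat and N a c :: real
  defines "q \<equiv> d_par n N a c" and "p \<equiv> N / real n"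
    and "t \<equiv> (real n * (a - c) / (real n - 2 * N))\<^sup>2 / (d_par n N a c * (1 - d_par n N a c))"
  assumes "0 < N" "3 * N < real n" "0 < q" "q < 1"
  shows "low_degree_chi2 (edges n) D q (alt_prob n N a c)
    \<le> (\<Sum>e\<le>D. \<Sum>k=2..n. if k \<le> e then t ^ e * p ^ (2 * k) * (real n ^ k * real k ^ (2 * e)) else 0)"
proof -
  define SS where "SS = {S. S \<subseteq> edges n \<and> S \<noteq> {} \<and> card S \<le> D}"
  define H where "H y = (if snd y \<le> fst y then t ^ fst y * p ^ (2 * snd y) else 0)" for y :: "nat \<times> nat"
  define g where "g S = (card S, card (verts S))" for S :: "(nat \<times> nat) set"
  have finite_SS: "finite SS" unfolding SS_def by (rule finite_subset[of _ "Pow (edges n)"]) auto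
  have H_nonneg: "0 \<le> H y" for y
    using assms(4-7) unfolding H_def t_def p_def q_def[symmetric] by simp
  have g_SS: "g ` SS \<subseteq> {..D} \<times> {2..n}"
  proof
    fix y assume "y \<in> g ` SS"
    then obtain S where S: "S \<subseteq> edges n" "S \<noteq> {}" "card S \<le> D" "y = g S" by (auto simp: SS_def)
    have "card (verts S) \<le> card {..<n}"
      using verts_subset_lessThan[OF S(1)] by (rule card_mono[rotated]) simp
    thus "y \<in> {..D} \<times> {2..n}" using S two_le_card_verts[OF S(1,2)] by (simp add: g_def)
  qed
  have "low_degree_chi2 (edges n) D q (alt_prob n N a c)
      = (\<Sum>S\<in>SS. (expect_on (edges n) (alt_prob n N a c) (biased_char q S))\<^sup>2 / (q * (1 - q)) ^ card S)"
    by (simp add: low_degree_chi2_def SS_def)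
  also have "\<dots> \<le> (\<Sum>S\<in>SS. H (g S))"
  proof (rule sum_mono)
    fix S assume "S \<in> SS"
    show "(expect_on (edges n) (alt_prob n N a c) (biased_char q S))\<^sup>2 / (q * (1 - q)) ^ card S \<le> H (g S)"
      unfolding H_def g_def fst_conv snd_conv q_def t_def p_def
      by (rule planted_chi2_term_le) (use assms(4-7) \<open>S \<in> SS\<close> in \<open>simp_all add: SS_def q_def\<close>)
  qed
  also have "\<dots> = (\<Sum>y\<in>{..D} \<times> {2..n}. \<Sum>S | S \<in> SS \<and> g S = y. H (g S))"
    by (rule sum.group[symmetric, OF finite_SS _ g_SS]) simp
  also have "\<dots> = (\<Sum>y\<in>{..D} \<times> {2..n}. H y * real (card {S \<in> SS. g S = y}))"
    by (intro sum.cong refl) simp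
  also have "\<dots> \<le> (\<Sum>y\<in>{..D} \<times> {2..n}. H y * (real n ^ snd y * real (snd y) ^ (2 * fst y)))"
  proof (intro sum_mono mult_left_mono H_nonneg)
    fix y :: "nat \<times> nat"
    have "{S \<in> SS. g S = y} \<subseteq> {S. S \<subseteq> edges n \<and> card S = fst y \<and> card (verts S) = snd y}"
      by (auto simp: SS_def g_def)
    hence "card {S \<in> SS. g S = y} \<le> card {S. S \<subseteq> edges n \<and> card S = fst y \<and> card (verts S) = snd y}"
      by (rule card_mono[rotated]) (rule finite_subset[of _ "Pow (edges n)"], auto)
    also have "\<dots> \<le> n ^ snd y * (snd y * snd y) ^ fst y" by (rule card_edge_sets_le)
    finally have "real (card {S \<in> SS. g S = y}) \<le> real (n ^ snd y * (snd y * snd y) ^ fst y)"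
      by (rule of_nat_mono)
    thus "real (card {S \<in> SS. g S = y}) \<le> real n ^ snd y * real (snd y) ^ (2 * fst y)"
      by (simp add: power_mult power2_eq_square)
  qed
  also have "\<dots> = (\<Sum>e\<le>D. \<Sum>k=2..n. if k \<le> e then t ^ e * p ^ (2 * k) * (real n ^ k * real k ^ (2 * e)) else 0)"
    unfolding sum.cartesian_product by (intro sum.cong refl) (auto simp: H_def)
  finally show ?thesis .
qed

text \<open>The null density d is the edge density of the planted model.\<close>

lemma d_par_eq_mixture:
  assumes "0 < N" "3 * N < real n"
  shows "d_par n N a c = (N / n)\<^sup>2 * a + (1 - N / n)\<^sup>2 * c + 2 * (N / n) * (1 - N / n) * b_par n N a c"
proof -
  have "real n \<noteq> 0" "real n - 2 * N \<noteq> 0" using assms by auto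
  thus ?thesis unfolding d_par_def b_par_def by (simp add: divide_simps) algebra
qed

lemma d_par_eq_c_minus:
  assumes "0 < N" "3 * N < real n"
  shows "d_par n N a c = c - (a - c) * N\<^sup>2 / (real n * (real n - 2 * N))"
proof -
  have "real n \<noteq> 0" "real n - 2 * N \<noteq> 0" using assms by auto
  thus ?thesis unfolding d_par_def by (simp add: divide_simps) algebra
qed

lemma d_par_bounds:
  assumes "0 < N" "3 * N < real n" "0 \<le> c" "c \<le> a" "0 \<le> b_par n N a c"
  shows "4 / 9 * c \<le> d_par n N a c" "d_par n N a c \<le> c"
proof -
  define p where "p = N / real n"
  have p: "0 < p" "p < 1 / 3" using assms(1,2) by (auto simp: p_def field_simps)
  have "4 / 9 \<le> (1 - p)\<^sup>2"
    using power_mono[of "2 / 3" "1 - p" 2] p by (simp add: power2_eq_square)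
  hence "4 / 9 * c \<le> (1 - p)\<^sup>2 * c" using assms(3) by (rule mult_right_mono)
  moreover have "0 \<le> p\<^sup>2 * a" "0 \<le> 2 * p * (1 - p) * b_par n N a c" using p assms(3-5) by auto
  ultimately show "4 / 9 * c \<le> d_par n N a c"
    unfolding d_par_eq_mixture[OF assms(1,2)] p_def[symmetric] by linarith
  have "0 \<le> (a - c) * N\<^sup>2 / (real n * (real n - 2 * N))" using assms by simp
  thus "d_par n N a c \<le> c" unfolding d_par_eq_c_minus[OF assms(1,2)] by simp
qed

lemma signal_to_noise_le:
  assumes "0 < N" "3 * N < real n" "0 < c" "c \<le> a" "0 < \<delta>" "c < 1 - \<delta>" "0 \<le> b_par n N a c"
  shows "(real n * (a - c) / (real n - 2 * N))\<^sup>2 / (d_par n N a c * (1 - d_par n N a c))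
      \<le> 81 / (4 * \<delta>) * ((a - c) / sqrt c)\<^sup>2"
proof -
  define q where "q = d_par n N a c"
  define \<kappa> where "\<kappa> = real n * (a - c) / (real n - 2 * N)"
  have q: "4 / 9 * c \<le> q" "q \<le> c" using d_par_bounds[OF assms(1,2)] assms(3,4,7) by (auto simp: q_def)
  have "0 \<le> \<kappa>" using assms by (simp add: \<kappa>_def)
  moreover have "\<kappa> \<le> 3 * (a - c)"
  proof -
    have "0 \<le> (a - c) * (2 * real n - 6 * N)" using assms by (intro mult_nonneg_nonneg) auto
    hence "real n * (a - c) \<le> 3 * (a - c) * (real n - 2 * N)" by (simp add: algebra_simps)
    thus ?thesis using assms(1,2) unfolding \<kappa>_def by (simp add: divide_le_eq)
  qed
  ultimately have "\<kappa>\<^sup>2 \<le> (3 * (a - c))\<^sup>2" by (simp add: power_mono)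
  moreover have "4 / 9 * c * \<delta> \<le> q * (1 - q)" using q assms(3,5,6) by (intro mult_mono) auto
  ultimately have "\<kappa>\<^sup>2 / (q * (1 - q)) \<le> (3 * (a - c))\<^sup>2 / (4 / 9 * c * \<delta>)"
    using assms(3,5) by (intro frac_le) auto
  also have "\<dots> = 81 / (4 * \<delta>) * ((a - c) / sqrt c)\<^sup>2"
    using assms(3) by (simp add: power_divide power_mult_distrib field_simps power2_eq_square)
  finally show ?thesis by (simp add: q_def \<kappa>_def)
qed

lemma power_le_powr_of_log_bounds:
  fixes x s r \<mu> :: real and k e :: nat
  assumes "1 < x" "0 < s" "0 < r" "0 \<le> \<mu>" "k \<le> e"
    and "log x s + log x r \<le> - \<mu>" "log x r \<le> - \<mu>"
  shows "s ^ (2 * k) * r ^ (2 * e) \<le> (x powr (- 2 * \<mu>)) ^ e"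
proof -
  define \<sigma> where "\<sigma> = log x s"
  define \<rho> where "\<rho> = log x r"
  have "real k * \<sigma> + real e * \<rho> \<le> - \<mu> * real e"
  proof (cases "\<sigma> \<le> 0")
    case True
    thus ?thesis
      using mult_left_mono[OF assms(7), of "real e"] mult_nonneg_nonpos[of "real k" \<sigma>]
      by (simp add: \<rho>_def mult.commute)
  next
    case False
    have "real k * \<sigma> + real e * \<rho> = real k * (\<sigma> + \<rho>) + (real e - real k) * \<rho>"
      by (simp add: algebra_simps)
    also have "\<dots> \<le> real k * (- \<mu>) + (real e - real k) * (- \<mu>)"
      using assms(5-7) by (intro add_mono mult_left_mono) (auto simp: \<sigma>_def \<rho>_def)
    finally show ?thesis by (simp add: algebra_simps)
  qed
  hence "x powr (\<sigma> * real (2 * k) + \<rho> * real (2 * e)) \<le> x powr (- 2 * \<mu> * real e)"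
    using assms(1) by (intro powr_mono) (auto simp: algebra_simps)
  moreover have "s = x powr \<sigma>" "r = x powr \<rho>" using assms(1-3) by (simp_all add: \<sigma>_def \<rho>_def)
  ultimately show ?thesis
    using assms(1) by (simp add: powr_realpow[symmetric] powr_powr powr_add)
qed

lemma planted_sum_le:
  fixes n D :: nat and t p K r s \<mu> :: real
  defines "Y \<equiv> K * real D ^ 2 * real n powr (- 2 * \<mu>)"
  assumes n: "1 < real n" and t: "0 \<le> t" "t \<le> K * r\<^sup>2" and K: "0 \<le> K"
    and s: "p\<^sup>2 * real n = s\<^sup>2" "0 < s" and r: "0 < r" and \<mu>: "0 \<le> \<mu>"
    and log_bounds: "log n s + log n r \<le> - \<mu>" "log n r \<le> - \<mu>" and Y: "Y \<le> 1"
  shows "(\<Sum>e\<le>D. \<Sum>k=2..n. if k \<le> e then t ^ e * p ^ (2 * k) * (real n ^ k * real k ^ (2 * e)) else 0)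
    \<le> (real D + 1)\<^sup>2 * Y"
proof -
  have Y_nonneg: "0 \<le> Y" using K by (simp add: Y_def)
  have summand_le: "t ^ e * p ^ (2 * k) * (real n ^ k * real k ^ (2 * e)) \<le> Y"
    if "2 \<le> k" "k \<le> e" "e \<le> D" for e k
  proof -
    have "t ^ e * p ^ (2 * k) * (real n ^ k * real k ^ (2 * e)) = t ^ e * (p\<^sup>2 * real n) ^ k * (real k ^ 2) ^ e"
      by (simp add: power_mult_distrib mult_ac flip: power_mult)
    also have "\<dots> \<le> (K * r\<^sup>2) ^ e * s ^ (2 * k) * (real D ^ 2) ^ e"
      using t s(1) that
      by (intro mult_mono power_mono) (auto simp: power_mult)
    also have "\<dots> = (K * real D ^ 2) ^ e * (s ^ (2 * k) * r ^ (2 * e))"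
      by (simp add: power_mult_distrib mult_ac flip: power_mult)
    also have "\<dots> \<le> (K * real D ^ 2) ^ e * (real n powr (- 2 * \<mu>)) ^ e"
      using n s(2) r \<mu> log_bounds K that by (intro mult_left_mono power_le_powr_of_log_bounds) auto
    also have "\<dots> = Y ^ e" by (simp add: Y_def power_mult_distrib)
    also have "\<dots> \<le> Y" using Y_nonneg Y that by (intro power_le_one_iff power_decreasing[of 1 e Y, simplified]) auto
    finally show ?thesis .
  qed
  have "(\<Sum>e\<le>D. \<Sum>k=2..n. if k \<le> e then t ^ e * p ^ (2 * k) * (real n ^ k * real k ^ (2 * e)) else 0)
      \<le> (\<Sum>e\<le>D. \<Sum>k=2..n. if k \<in> {..D} then Y else 0)"
    using Y_nonneg summand_le by (intro sum_mono) auto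
  also have "\<dots> = (\<Sum>e\<le>D. \<Sum>k\<in>{2..n} \<inter> {..D}. Y)"
    by (simp only: sum.inter_restrict[OF finite_atLeastAtMost])
  also have "\<dots> \<le> (\<Sum>e\<le>D. (real D + 1) * Y)"
  proof (intro sum_mono)
    have "card ({2..n} \<inter> {..D}) \<le> card {..D}" by (rule card_mono) auto
    thus "(\<Sum>k\<in>{2..n} \<inter> {..D}. Y) \<le> (real D + 1) * Y" using Y_nonneg by (simp add: mult_right_mono)
  qed
  finally show ?thesis by (simp add: power2_eq_square algebra_simps)
qed

lemma low_degree_chi2_planted_le_powr:
  fixes n D :: nat and N a c \<delta> \<mu> :: real
  defines "Y \<equiv> 81 / (4 * \<delta>) * real D ^ 2 * real n powr (- 2 * \<mu>)"
  assumes params: "0 < c" "c < a" "0 < \<delta>" "c < 1 - \<delta>" "0 \<le> b_par n N a c" "0 < N" "3 * N < real n"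
    and n: "1 < real n" and \<mu>: "0 \<le> \<mu>"
    and log_bounds: "log n (N / sqrt n) + log n ((a - c) / sqrt c) \<le> - \<mu>" "log n ((a - c) / sqrt c) \<le> - \<mu>"
    and Y: "Y \<le> 1"
  shows "low_degree_chi2 (edges n) D (d_par n N a c) (alt_prob n N a c) \<le> (real D + 1)\<^sup>2 * Y"
proof -
  define q where "q = d_par n N a c"
  have "4 / 9 * c \<le> q" "q \<le> c" using d_par_bounds[OF params(6,7)] params by (auto simp: q_def)
  hence q: "0 < q" "q < 1" using params by auto
  have "low_degree_chi2 (edges n) D q (alt_prob n N a c)
      \<le> (\<Sum>e\<le>D. \<Sum>k=2..n. if k \<le> e
           then ((real n * (a - c) / (real n - 2 * N))\<^sup>2 / (q * (1 - q))) ^ e * (N / real n) ^ (2 * k)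
                * (real n ^ k * real k ^ (2 * e))
           else 0)"
    unfolding q_def by (rule low_degree_chi2_planted_le_sum[OF params(6,7)]) (use q in \<open>simp_all add: q_def\<close>)
  also have "\<dots> \<le> (real D + 1)\<^sup>2 * Y"
    unfolding Y_def
  proof (rule planted_sum_le[OF n _ _ _ _ _ _ \<mu> log_bounds Y[unfolded Y_def]])
    show "0 \<le> (real n * (a - c) / (real n - 2 * N))\<^sup>2 / (q * (1 - q))" using q by simp
    show "(real n * (a - c) / (real n - 2 * N))\<^sup>2 / (q * (1 - q)) \<le> 81 / (4 * \<delta>) * ((a - c) / sqrt c)\<^sup>2"
      unfolding q_def by (rule signal_to_noise_le) (use params in auto)
    show "(N / real n)\<^sup>2 * real n = (N / sqrt (real n))\<^sup>2" using n by (simp add: power_divide power2_eq_square)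
  qed (use params in auto)
  finally show ?thesis by (simp add: q_def)
qed

lemma low_degree_chi2_planted_le_exp:
  fixes n D :: nat and N a c \<delta> \<eta> C :: real
  defines "B \<equiv> 81 / (4 * \<delta>) * (1 + C * ln n) ^ 4 * exp (- 2 * \<eta> * ln n / sqrt (1 + C * ln n))"
  assumes params: "0 < c" "c < a" "0 < \<delta>" "c < 1 - \<delta>" "0 \<le> b_par n N a c" "0 < N" "3 * N < real n"
    and n: "2 \<le> n" and \<eta>: "0 < \<eta>" and C: "0 < C" "real D \<le> C * ln n"
    and max: "max (log n (N / sqrt n) + log n ((a - c) / sqrt c))
                  (sqrt (real D / 2 - 1) * log n ((a - c) / sqrt c)) < - \<eta>"
    and B: "B \<le> 1"
  shows "low_degree_chi2 (edges n) D (d_par n N a c) (alt_prob n N a c) \<le> B"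
proof -
  define L where "L = 1 + C * ln n"
  define \<mu> where "\<mu> = \<eta> / sqrt L"
  define Y where "Y = 81 / (4 * \<delta>) * real D ^ 2 * real n powr (- 2 * \<mu>)"
  have ln_n: "0 < ln n" using n by simp
  have L: "1 \<le> L" "real D + 1 \<le> L" using C ln_n by (auto simp: L_def)
  have B_nonneg: "0 \<le> B" using params(3) by (simp add: B_def)
  consider "D \<le> 1" | "D = 2" | "3 \<le> D" by linarith
  thus ?thesis
  proof cases
    case 1
    txt \<open>Here the limsup hypothesis says nothing (\<open>sqrt\<close> of a negative number), but every
      graph with at most one edge has a leaf.\<close>
    have "low_degree_chi2 (edges n) D (d_par n N a c) (alt_prob n N a c) \<le> 0"
      using low_degree_chi2_planted_le_sum[OF params(6,7), of a c D] d_par_bounds[OF params(6,7), of c a]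
        params 1 by auto
    thus ?thesis using B_nonneg by linarith
  next
    case 2
    with max \<eta> show ?thesis by simp
  next
    case 3
    define z where "z = sqrt (real D / 2 - 1)"
    have z: "0 < z" "z \<le> sqrt L"
      using 3 C(2) by (auto simp: z_def L_def intro!: real_sqrt_le_mono)
    have "log n ((a - c) / sqrt c) * z < - \<eta>" using max by (simp add: z_def mult.commute)
    hence "log n ((a - c) / sqrt c) * z / z < - \<eta> / z" by (rule divide_strict_right_mono[OF _ z(1)])
    hence "log n ((a - c) / sqrt c) < - \<eta> / z" using z(1) by simp
    also have "\<dots> \<le> - \<mu>"
      using z \<eta> unfolding \<mu>_def by (simp add: frac_le)
    finally have "log n ((a - c) / sqrt c) \<le> - \<mu>" by simp
    moreover have "\<mu> \<le> \<eta> / 1" unfolding \<mu>_def using \<eta> L(1) by (intro divide_left_mono) auto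
    hence "log n (N / sqrt n) + log n ((a - c) / sqrt c) \<le> - \<mu>" using max by simp
    moreover have "(real D + 1)\<^sup>2 * Y \<le> B"
    proof -
      have "(real D + 1)\<^sup>2 \<le> L\<^sup>2" "real D ^ 2 \<le> L\<^sup>2" using L(2) by (auto intro: power_mono)
      hence "(real D + 1)\<^sup>2 * real D ^ 2 \<le> L\<^sup>2 * L\<^sup>2" by (intro mult_mono) auto
      hence "(real D + 1)\<^sup>2 * real D ^ 2 \<le> L ^ 4" by (simp flip: power_add)
      moreover have "real n powr (- 2 * \<mu>) = exp (- 2 * \<eta> * ln n / sqrt L)"
        using n by (simp add: powr_def \<mu>_def)
      ultimately have "(real D + 1)\<^sup>2 * Y
          = 81 / (4 * \<delta>) * exp (- 2 * \<eta> * ln n / sqrt L) * ((real D + 1)\<^sup>2 * real D ^ 2)"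
        by (simp add: Y_def)
      also have "\<dots> \<le> 81 / (4 * \<delta>) * exp (- 2 * \<eta> * ln n / sqrt L) * L ^ 4"
        using params(3) by (intro mult_left_mono \<open>_ \<le> L ^ 4\<close>) auto
      finally show ?thesis by (simp add: B_def L_def mult_ac)
    qed
    moreover have "Y \<le> (real D + 1)\<^sup>2 * Y"
      using mult_right_mono[of 1 "(real D + 1)\<^sup>2" Y] params(3) by (simp add: Y_def one_le_power)
    ultimately show ?thesis
      using low_degree_chi2_planted_le_powr[OF params, of \<mu> D] n \<eta> L(1) B
      by (force simp: \<mu>_def Y_def)
  qed
qed

lemma null_prob_eq_bernoulli_prod: "null_prob n q = bernoulli_prod (edges n) (\<lambda>_. q)"
  by (simp add: fun_eq_iff null_prob_def bernoulli_prod_def)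

lemma abs_E_alt_le_sqrt_low_degree_chi2:
  assumes "0 < q" "q < 1" "lowdeg_poly n D \<phi>" "E_null n q \<phi> = 0" "Var_null n q \<phi> = 1"
  shows "\<bar>E_alt n N a c \<phi>\<bar> \<le> sqrt (low_degree_chi2 (edges n) D q (alt_prob n N a c))"
proof -
  have E_null: "E_null n q f = expect_on (edges n) (bernoulli_prod (edges n) (\<lambda>_. q)) f" for f
    by (simp add: E_null_def expect_on_def null_prob_eq_bernoulli_prod)
  obtain ch where "\<And>G. G \<subseteq> edges n \<Longrightarrow>
      \<phi> G = (\<Sum>S | S \<subseteq> edges n \<and> card S \<le> D. ch S * biased_char q S G)"
    using lowdeg_poly_biased_char_expansion[OF assms(3)] by blast
  from abs_expect_on_le_sqrt_low_degree_chi2[OF finite_edges assms(1,2) this]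
  show ?thesis
    using assms(4,5) by (simp add: E_alt_def expect_on_def Var_null_def E_null)
qed

lemma abs_E_alt_planted_le_sqrt:
  fixes n D :: nat and N a c \<delta> \<eta> C :: real
  defines "B \<equiv> 81 / (4 * \<delta>) * (1 + C * ln n) ^ 4 * exp (- 2 * \<eta> * ln n / sqrt (1 + C * ln n))"
  assumes params: "0 < c" "c < a" "0 < \<delta>" "c < 1 - \<delta>" "0 \<le> b_par n N a c" "0 < N" "3 * N < real n"
    and n: "2 \<le> n" and \<eta>: "0 < \<eta>" and C: "0 < C" "real D \<le> C * ln n"
    and max: "max (log n (N / sqrt n) + log n ((a - c) / sqrt c))
                  (sqrt (real D / 2 - 1) * log n ((a - c) / sqrt c)) < - \<eta>"
    and B: "B \<le> 1"
    and \<phi>: "lowdeg_poly n D \<phi>" "E_null n (d_par n N a c) \<phi> = 0" "Var_null n (d_par n N a c) \<phi> = 1"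
  shows "\<bar>E_alt n N a c \<phi>\<bar> \<le> sqrt B"
proof -
  have "0 < d_par n N a c" "d_par n N a c < 1"
    using d_par_bounds[OF params(6,7), of c a] params by auto
  hence "\<bar>E_alt n N a c \<phi>\<bar> \<le> sqrt (low_degree_chi2 (edges n) D (d_par n N a c) (alt_prob n N a c))"
    using abs_E_alt_le_sqrt_low_degree_chi2 \<phi> by blast
  also have "\<dots> \<le> sqrt B"
    using low_degree_chi2_planted_le_exp[OF params n \<eta> C max B[unfolded B_def]]
    by (simp add: B_def)
  finally show ?thesis .
qed

lemma limsup_ereal_less_0E:
  fixes f :: "nat \<Rightarrow> real"
  assumes "limsup (\<lambda>n. ereal (f n)) < 0"
  obtains \<eta> where "0 < \<eta>" "eventually (\<lambda>n. f n < - \<eta>) sequentially"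
proof -
  obtain z where z: "limsup (\<lambda>n. ereal (f n)) < ereal z" "z < 0"
    using assms ereal_dense2 by (metis ereal_less_eq(3) less_ereal.simps(1) order_less_le_trans zero_ereal_def)
  have "eventually (\<lambda>n. ereal (f n) < ereal z) sequentially" by (rule Limsup_lessD[OF z(1)])
  with z(2) show ?thesis by (intro that[of "- z"]) simp_all
qed

lemma tendsto_ln_power_exp_sqrt_ln:
  assumes "0 < C" "0 < \<eta>"
  shows "((\<lambda>n::nat. K * (1 + C * ln n) ^ 4 * exp (- 2 * \<eta> * ln n / sqrt (1 + C * ln n))) \<longlongrightarrow> 0) sequentially"
proof -
  have "((\<lambda>x::real. (1 + C * ln x) ^ 4 * exp (- 2 * \<eta> * ln x / sqrt (1 + C * ln x))) \<longlongrightarrow> 0) at_top"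
    using assms by real_asymp
  from tendsto_mult_right_zero[OF filterlim_compose[OF this filterlim_real_sequentially], of K]
  show ?thesis by (simp add: mult.assoc)
qed

theorem theorem6:
  fixes N a c :: "nat \<Rightarrow> real" and D :: "nat \<Rightarrow> nat" and \<delta> :: real
  assumes "\<delta> > 0"
    and "eventually (\<lambda>n. 0 < c n \<and> c n < a n \<and> a n \<le> 1 \<and> c n < 1 - \<delta> \<and>
                         b_par n (N n) (a n) (c n) \<ge> 0 \<and>
                         0 < N n \<and> N n < real n / 3) sequentially"
    and "(\<lambda>n. real (D n)) \<in> O(\<lambda>n. ln (real n))"
    and "limsup (\<lambda>n. ereal (max
            (log (real n) (N n / sqrt (real n)) + log (real n) ((a n - c n) / sqrt (c n)))
            (sqrt (real (D n) / 2 - 1) * log (real n) ((a n - c n) / sqrt (c n))))) < 0"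
  shows "\<forall>\<epsilon>>0. eventually (\<lambda>n. \<forall>\<phi>.
            lowdeg_poly n (D n) \<phi> \<and>
            E_null n (d_par n (N n) (a n) (c n)) \<phi> = 0 \<and>
            Var_null n (d_par n (N n) (a n) (c n)) \<phi> = 1 \<longrightarrow>
            \<bar>E_alt n (N n) (a n) (c n) \<phi>\<bar> \<le> \<epsilon>) sequentially"
proof (intro allI impI)
  fix \<epsilon> :: real assume "\<epsilon> > 0"
  obtain \<eta> where \<eta>: "0 < \<eta>" "eventually (\<lambda>n. max
            (log (real n) (N n / sqrt (real n)) + log (real n) ((a n - c n) / sqrt (c n)))
            (sqrt (real (D n) / 2 - 1) * log (real n) ((a n - c n) / sqrt (c n))) < - \<eta>) sequentially"
    by (rule limsup_ereal_less_0E[OF assms(4)])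
  obtain C where C: "0 < C" "eventually (\<lambda>n. norm (real (D n)) \<le> C * norm (ln (real n))) sequentially"
    using assms(3) by (rule landau_o.bigE)
  define B where "B n = 81 / (4 * \<delta>) * (1 + C * ln n) ^ 4 * exp (- 2 * \<eta> * ln n / sqrt (1 + C * ln n))"
    for n :: nat
  have "(B \<longlongrightarrow> 0) sequentially"
    unfolding B_def by (rule tendsto_ln_power_exp_sqrt_ln[OF C(1) \<eta>(1)])
  hence "eventually (\<lambda>n. B n < min 1 (\<epsilon>\<^sup>2)) sequentially"
    by (rule order_tendstoD(2)) (use \<open>\<epsilon> > 0\<close> in simp)
  with assms(2) \<eta>(2) C(2) eventually_ge_at_top[of 2]
  show "eventually (\<lambda>n. \<forall>\<phi>. lowdeg_poly n (D n) \<phi> \<and> E_null n (d_par n (N n) (a n) (c n)) \<phi> = 0 \<and>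
            Var_null n (d_par n (N n) (a n) (c n)) \<phi> = 1 \<longrightarrow> \<bar>E_alt n (N n) (a n) (c n) \<phi>\<bar> \<le> \<epsilon>) sequentially"
  proof eventually_elim
    case (elim n)
    have "sqrt (B n) \<le> \<epsilon>"
      using real_sqrt_le_mono[of "B n" "\<epsilon>\<^sup>2"] elim(5) \<open>\<epsilon> > 0\<close> by simp
    moreover have "\<bar>E_alt n (N n) (a n) (c n) \<phi>\<bar> \<le> sqrt (B n)"
      if "lowdeg_poly n (D n) \<phi> \<and> E_null n (d_par n (N n) (a n) (c n)) \<phi> = 0 \<and>
          Var_null n (d_par n (N n) (a n) (c n)) \<phi> = 1" for \<phi>
      unfolding B_def using elim that assms(1) \<eta>(1) C(1)
      by (intro abs_E_alt_planted_le_sqrt) (auto simp: B_def)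
    ultimately show ?case by (meson order_trans)
  qed
qed

end
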